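(* Let $\alpha\in\mathbb{R}\setminus\{0\}$, fix $z>0$, and let $\lambda\le\frac34\alpha^2$, $\kappa=\sqrt{\alpha^2-\lambda}$. Then $$\Big|M\Big(\tfrac12+j+|m|+m\tfrac{\alpha}{\kappa},\,1+j+2|m|,\,z\Big)\Big|\le e^{2z}\qquad\forall m\in\mathbb{Z},\ j=0,1.$$ Moreover, there exist $\lambda_c\le\frac34\alpha^2$ and $m_c\in\mathbb{N}$, with $m_c$ independent of $\lambda_c$, such that for all $\lambda\in(0,\lambda_c)$ and all $m\in\mathbb{Z}$ with $|m|\ge m_c$, $$M\Big(\tfrac12+|m|+m\tfrac{\alpha}{\kappa},\,1+2|m|,\,z\Big)\ge\tfrac12.$$
   Context: $M(a,b,z)=\sum_{n\ge0}\frac{(a)_n}{(b)_n}\frac{z^n}{n!}$ is Kummer's confluent hypergeometric function, with $(a)_n=a(a+1)\cdots(a+n-1)$, $(a)_0=1$. *)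

theory Defs
  imports Complex_Main
begin

definition kummerM :: "real \<Rightarrow> real \<Rightarrow> real \<Rightarrow> real" where
  "kummerM a b z = (\<Sum>n. pochhammer a n / pochhammer b n * z ^ n / fact n)"

end

theory Submission
  imports Defs
begin

text \<open>Both estimates compare the series of \<open>M(a,b,z)\<close> termwise with the exponential
  series. If \<open>\<bar>a + k\<bar> \<le> c (b + k)\<close> for all \<open>k\<close>, then \<open>\<bar>(a)\<^sub>n / (b)\<^sub>n\<bar> \<le> c\<^sup>n\<close> and so
  \<open>\<bar>M(a,b,z)\<bar> \<le> exp (c \<bar>z\<bar>)\<close>; for \<open>\<lambda> \<le> 3/4 \<alpha>\<^sup>2\<close> one has \<open>\<bar>\<alpha>/\<kappa>\<bar> \<le> 2\<close>, which gives \<open>c = 2\<close>.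
  For the lower bound, \<open>M \<ge> 1\<close> if \<open>a \<ge> 0\<close>, while
  \<open>M - 1 = (a/b) \<Sum>\<^sub>n (a+1)\<^sub>n / (b+1)\<^sub>n z\<^sup>n\<^sup>+\<^sup>1 / (n+1)!\<close> with ratios of modulus at most \<open>1\<close>
  when \<open>\<bar>a\<bar> \<le> b\<close>; hence \<open>M \<ge> 1 - \<epsilon> (e\<^sup>z - 1)\<close> as soon as \<open>a \<ge> -\<epsilon> b\<close>. Taking \<open>\<lambda>\<^sub>c\<close> so small
  that \<open>\<bar>\<alpha>/\<kappa>\<bar> \<le> 1 + 2\<epsilon>\<close> gives \<open>a \<ge> 1/2 - 2\<epsilon>\<bar>m\<bar> \<ge> -\<epsilon> (1 + 2\<bar>m\<bar>)\<close> for every \<open>m\<close>,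
  so \<open>m\<^sub>c = 0\<close> works.\<close>

lemma exp_sums_real: "(\<lambda>n. x ^ n / fact n) sums exp (x::real)"
  using exp_converges[of x] by (simp add: divide_inverse scaleR_conv_of_real mult.commute)

lemma abs_pochhammer_ratio_le:
  fixes a b c :: real
  assumes "b > 0" "c \<ge> 0" "\<And>k::nat. \<bar>a + k\<bar> \<le> c * (b + k)"
  shows "\<bar>pochhammer a n / pochhammer b n\<bar> \<le> c ^ n"
proof (induction n)
  case 0
  then show ?case by simp
next
  case (Suc n)
  have bk: "b + real n > 0" using assms(1) by simp
  have "\<bar>pochhammer a (Suc n) / pochhammer b (Suc n)\<bar>
      = \<bar>pochhammer a n / pochhammer b n\<bar> * (\<bar>a + n\<bar> / (b + n))"
    by (simp add: pochhammer_Suc abs_mult abs_divide abs_of_pos[OF bk])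
  also have "\<dots> \<le> c ^ n * c"
  proof (rule mult_mono)
    show "\<bar>a + n\<bar> / (b + n) \<le> c" using assms(3)[of n] bk by (simp add: divide_le_eq)
  qed (use Suc assms(2) bk in auto)
  finally show ?case by (simp add: mult.commute)
qed

lemma abs_kummerM_term_le:
  fixes a b c z :: real
  assumes "b > 0" "c \<ge> 0" "\<And>k::nat. \<bar>a + k\<bar> \<le> c * (b + k)"
  shows "\<bar>pochhammer a n / pochhammer b n * z ^ n / fact n\<bar> \<le> (c * \<bar>z\<bar>) ^ n / fact n"
proof -
  have "\<bar>pochhammer a n / pochhammer b n * z ^ n / fact n\<bar>
      = \<bar>pochhammer a n / pochhammer b n\<bar> * \<bar>z\<bar> ^ n / fact n"
    by (simp add: abs_mult abs_divide power_abs)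
  also have "\<dots> \<le> c ^ n * \<bar>z\<bar> ^ n / fact n"
    by (intro divide_right_mono mult_right_mono abs_pochhammer_ratio_le assms) auto
  finally show ?thesis by (simp add: power_mult_distrib)
qed

lemma
  fixes a b c z :: real
  assumes "b > 0" "c \<ge> 0" "\<And>k::nat. \<bar>a + k\<bar> \<le> c * (b + k)"
  shows summable_kummerM_series_bounded:
      "summable (\<lambda>n. pochhammer a n / pochhammer b n * z ^ n / fact n)"
    and abs_kummerM_le_exp: "\<bar>kummerM a b z\<bar> \<le> exp (c * \<bar>z\<bar>)"
proof -
  let ?f = "\<lambda>n. pochhammer a n / pochhammer b n * z ^ n / fact n"
  have le: "\<bar>?f n\<bar> \<le> (c * \<bar>z\<bar>) ^ n / fact n" for n
    using abs_kummerM_term_le[OF assms] .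
  have sg: "summable (\<lambda>n. (c * \<bar>z\<bar>) ^ n / fact n)"
    using exp_sums_real by (rule sums_summable)
  have sa: "summable (\<lambda>n. \<bar>?f n\<bar>)"
    by (rule summable_comparison_test[OF _ sg]) (use le in auto)
  then show "summable ?f" by (rule summable_rabs_cancel)
  have "\<bar>kummerM a b z\<bar> \<le> (\<Sum>n. \<bar>?f n\<bar>)"
    unfolding kummerM_def by (rule summable_rabs[OF sa])
  also have "\<dots> \<le> (\<Sum>n. (c * \<bar>z\<bar>) ^ n / fact n)" by (rule suminf_le[OF le sa sg])
  also have "\<dots> = exp (c * \<bar>z\<bar>)" using exp_sums_real sums_unique by metis
  finally show "\<bar>kummerM a b z\<bar> \<le> exp (c * \<bar>z\<bar>)" .
qed

lemma summable_kummerM_series: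
  fixes a b z :: real
  assumes "b > 0"
  shows "summable (\<lambda>n. pochhammer a n / pochhammer b n * z ^ n / fact n)"
proof (rule summable_kummerM_series_bounded)
  fix k :: nat
  have "\<bar>a\<bar> \<le> max 1 (\<bar>a\<bar> / b) * b" and "real k \<le> max 1 (\<bar>a\<bar> / b) * k"
    using assms by (auto simp: field_simps max_def intro: mult_right_mono)
  then show "\<bar>a + k\<bar> \<le> max 1 (\<bar>a\<bar> / b) * (b + k)"
    using abs_triangle_ineq[of a "real k"] by (simp add: distrib_left)
qed (use assms in auto)

lemma kummerM_ge_one:
  fixes a b z :: real
  assumes "a \<ge> 0" "b > 0" "z \<ge> 0"
  shows "1 \<le> kummerM a b z"
proof -
  let ?f = "\<lambda>n. pochhammer a n / pochhammer b n * z ^ n / fact n"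
  have "1 = ?f 0" by simp
  also have "\<dots> \<le> kummerM a b z"
    unfolding kummerM_def
  proof (rule sum_le_suminf[where I = "{0}", simplified])
    show "summable ?f" using assms(2) by (rule summable_kummerM_series)
    have "0 \<le> pochhammer a n" for n
      unfolding pochhammer_prod using assms(1) by (intro prod_nonneg) auto
    then show "0 \<le> ?f n" for n
      using pochhammer_pos[OF assms(2)] assms(3) by (auto intro!: divide_nonneg_pos)
  qed
  finally show ?thesis .
qed

lemma abs_kummerM_minus_one_le:
  fixes a b z \<epsilon> :: real
  assumes "b > 0" "z \<ge> 0" "\<bar>a\<bar> \<le> \<epsilon> * b" "\<epsilon> \<le> 1"
  shows "\<bar>kummerM a b z - 1\<bar> \<le> \<epsilon> * (exp z - 1)"
proof -
  let ?f = "\<lambda>n. pochhammer a n / pochhammer b n * z ^ n / fact n"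
  let ?g = "\<lambda>n. z ^ Suc n / fact (Suc n)"
  have "\<epsilon> * b \<le> 1 * b" using assms(1,4) by (intro mult_right_mono) auto
  with assms(3) have ab: "\<bar>a\<bar> \<le> b" by simp
  have "0 \<le> \<epsilon>" using assms(1,3) by (smt (verit) abs_ge_zero zero_le_mult_iff)
  have tail: "kummerM a b z - 1 = (\<Sum>n. ?f (Suc n))"
    unfolding kummerM_def using suminf_split_head[OF summable_kummerM_series[OF assms(1)]] by simp
  have term_le: "\<bar>?f (Suc n)\<bar> \<le> \<epsilon> * ?g n" for n
  proof -
    have ratio: "\<bar>pochhammer (a + 1) n / pochhammer (b + 1) n\<bar> \<le> 1 ^ n"
      by (rule abs_pochhammer_ratio_le) (use ab assms(1) in \<open>auto simp: abs_le_iff\<close>)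
    have "\<bar>?f (Suc n)\<bar> = \<bar>a\<bar> / b * \<bar>pochhammer (a + 1) n / pochhammer (b + 1) n\<bar> * ?g n"
      using assms(1,2) by (simp only: pochhammer_rec) (simp add: abs_mult abs_divide)
    also have "\<dots> \<le> \<epsilon> * 1 * ?g n"
      using ratio \<open>0 \<le> \<epsilon>\<close> assms(1,2,3) by (intro mult_right_mono mult_mono) (auto simp: divide_le_eq)
    finally show ?thesis by simp
  qed
  have "?g sums (exp z - 1)"
    using exp_sums_real[of z] by (subst sums_Suc_iff) simp
  then have eps_sums: "(\<lambda>n. \<epsilon> * ?g n) sums (\<epsilon> * (exp z - 1))"
    by (rule sums_mult)
  have sa: "summable (\<lambda>n. \<bar>?f (Suc n)\<bar>)"
    by (rule summable_comparison_test[OF _ sums_summable[OF eps_sums]]) (use term_le in auto)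
  have "\<bar>kummerM a b z - 1\<bar> \<le> (\<Sum>n. \<bar>?f (Suc n)\<bar>)"
    unfolding tail by (rule summable_rabs[OF sa])
  also have "\<dots> \<le> \<epsilon> * (exp z - 1)"
    using suminf_le[OF term_le sa sums_summable[OF eps_sums]] sums_unique[OF eps_sums] by simp
  finally show ?thesis .
qed

lemma kummerM_ge_one_minus:
  fixes a b z \<epsilon> :: real
  assumes "b > 0" "z \<ge> 0" "-(\<epsilon> * b) \<le> a" "0 \<le> \<epsilon>" "\<epsilon> \<le> 1"
  shows "1 - \<epsilon> * (exp z - 1) \<le> kummerM a b z"
proof (cases "a \<ge> 0")
  case True
  have "0 \<le> \<epsilon> * (exp z - 1)" using assms(2,4) by simp
  with kummerM_ge_one[OF True assms(1,2)] show ?thesis by linarith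
next
  case False
  then have "\<bar>a\<bar> \<le> \<epsilon> * b" using assms(3) by simp
  from abs_kummerM_minus_one_le[OF assms(1,2) this assms(5)] show ?thesis by linarith
qed

lemma abs_div_sqrt_le:
  fixes \<alpha> lam c :: real
  assumes "\<alpha> \<noteq> 0" "c > 0" "lam \<le> \<alpha>^2 * (1 - 1 / c^2)"
  shows "\<bar>\<alpha> / sqrt (\<alpha>^2 - lam)\<bar> \<le> c"
proof -
  have "(\<bar>\<alpha>\<bar> / c)^2 \<le> \<alpha>^2 - lam"
    using assms(3) by (simp add: power_divide algebra_simps)
  then have le: "\<bar>\<alpha>\<bar> / c \<le> sqrt (\<alpha>^2 - lam)" by (rule real_le_rsqrt)
  moreover have "0 < \<bar>\<alpha>\<bar> / c" using assms(1,2) by simp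
  ultimately have "0 < sqrt (\<alpha>^2 - lam)" by linarith
  with le assms(2) show ?thesis by (simp add: abs_divide divide_le_eq mult.commute)
qed

lemma abs_kummerM_index_le_exp:
  fixes r z j :: real and m :: int
  assumes "\<bar>r\<bar> \<le> 2" "j \<ge> 0"
  shows "\<bar>kummerM (1/2 + j + \<bar>m\<bar> + m * r) (1 + j + 2 * \<bar>m\<bar>) z\<bar> \<le> exp (2 * \<bar>z\<bar>)"
proof (rule abs_kummerM_le_exp)
  have "\<bar>m * r\<bar> \<le> 2 * \<bar>m\<bar>"
    using mult_left_mono[OF assms(1), of "\<bar>of_int m\<bar>"] by (simp add: abs_mult mult.commute)
  then show "\<bar>1/2 + j + \<bar>m\<bar> + m * r + k\<bar> \<le> 2 * (1 + j + 2 * \<bar>m\<bar> + k)" for k :: nat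
    using assms(2) by (simp add: abs_le_iff)
qed (use assms in auto)

lemma kummerM_index_ge_one_minus:
  fixes r z \<epsilon> :: real and m :: int
  assumes "\<bar>r\<bar> \<le> 1 + 2 * \<epsilon>" "0 \<le> \<epsilon>" "\<epsilon> \<le> 1" "z \<ge> 0"
  shows "1 - \<epsilon> * (exp z - 1) \<le> kummerM (1/2 + \<bar>m\<bar> + m * r) (1 + 2 * \<bar>m\<bar>) z"
proof (rule kummerM_ge_one_minus)
  have "\<bar>m * r\<bar> \<le> (1 + 2 * \<epsilon>) * \<bar>m\<bar>"
    using mult_left_mono[OF assms(1), of "\<bar>of_int m\<bar>"] by (simp add: abs_mult mult.commute)
  then show "-(\<epsilon> * (1 + 2 * \<bar>m\<bar>)) \<le> 1/2 + \<bar>m\<bar> + m * r"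
    using assms(2) by (simp add: abs_le_iff algebra_simps)
qed (use assms in auto)

theorem lemmaA2:
  fixes \<alpha> z :: real
  assumes "\<alpha> \<noteq> 0" and "z > 0"
  shows "(\<forall>lam::real. lam \<le> 3/4 * \<alpha>^2 \<longrightarrow>
            (\<forall>m::int. \<forall>j::nat. j \<in> {0, 1} \<longrightarrow>
              \<bar>kummerM (1/2 + real j + of_int \<bar>m\<bar> + of_int m * \<alpha> / sqrt (\<alpha>^2 - lam))
                       (1 + real j + 2 * of_int \<bar>m\<bar>) z\<bar> \<le> exp (2 * z)))
       \<and> (\<exists>mc::nat. \<exists>lc::real. 0 < lc \<and> lc \<le> 3/4 * \<alpha>^2 \<and>
            (\<forall>lam::real. 0 < lam \<and> lam < lc \<longrightarrow>
              (\<forall>m::int. \<bar>m\<bar> \<ge> int mc \<longrightarrow>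
                kummerM (1/2 + of_int \<bar>m\<bar> + of_int m * \<alpha> / sqrt (\<alpha>^2 - lam))
                        (1 + 2 * of_int \<bar>m\<bar>) z \<ge> 1/2)))"
proof (intro conjI allI impI)
  fix lam :: real and m :: int and j :: nat
  assume "lam \<le> 3/4 * \<alpha>^2"
  then have "\<bar>\<alpha> / sqrt (\<alpha>^2 - lam)\<bar> \<le> 2"
    using abs_div_sqrt_le[OF assms(1), of 2] by simp
  from abs_kummerM_index_le_exp[OF this, of "real j" m z] assms(2)
  show "\<bar>kummerM (1/2 + real j + of_int \<bar>m\<bar> + of_int m * \<alpha> / sqrt (\<alpha>^2 - lam))
                 (1 + real j + 2 * of_int \<bar>m\<bar>) z\<bar> \<le> exp (2 * z)"
    by (simp add: mult.assoc)
next
  define \<epsilon> where "\<epsilon> = min (1/2) (1 / (2 * (exp z - 1)))"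
  define lc where "lc = \<alpha>^2 * (1 - 1 / (1 + 2 * \<epsilon>)^2)"
  have ez: "exp z - 1 > 0" using assms(2) by simp
  then have \<epsilon>: "0 < \<epsilon>" "\<epsilon> \<le> 1/2" "1/2 \<le> 1 - \<epsilon> * (exp z - 1)"
    unfolding \<epsilon>_def by (auto simp: min_def field_simps)
  have "1 < (1 + 2 * \<epsilon>)^2" using \<epsilon> by (intro one_less_power) auto
  moreover have "(1 + 2 * \<epsilon>)^2 \<le> 2^2" using \<epsilon> by (intro power_mono) auto
  ultimately have q: "1 / (1 + 2 * \<epsilon>)^2 < 1" "1/4 \<le> 1 / (1 + 2 * \<epsilon>)^2"
    using \<epsilon>(1) by (simp_all add: divide_simps)
  have "0 < lc" unfolding lc_def using q assms(1) by simp
  moreover have "lc \<le> 3/4 * \<alpha>^2" unfolding lc_def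
    using mult_left_mono[of "1 - 1 / (1 + 2 * \<epsilon>)^2" "3/4" "\<alpha>^2"] q by (simp add: mult.commute)
  moreover have "kummerM (1/2 + of_int \<bar>m\<bar> + of_int m * \<alpha> / sqrt (\<alpha>^2 - lam))
                         (1 + 2 * of_int \<bar>m\<bar>) z \<ge> 1/2" if "lam < lc" for lam m
  proof -
    have "\<bar>\<alpha> / sqrt (\<alpha>^2 - lam)\<bar> \<le> 1 + 2 * \<epsilon>"
      using abs_div_sqrt_le[OF assms(1)] \<epsilon> that unfolding lc_def by simp
    with \<epsilon> assms(2) have "1 - \<epsilon> * (exp z - 1)
        \<le> kummerM (1/2 + \<bar>m\<bar> + m * (\<alpha> / sqrt (\<alpha>^2 - lam))) (1 + 2 * \<bar>m\<bar>) z"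
      by (intro kummerM_index_ge_one_minus) auto
    with \<epsilon>(3) show ?thesis by simp
  qed
  ultimately show "\<exists>mc::nat. \<exists>lc. 0 < lc \<and> lc \<le> 3/4 * \<alpha>^2 \<and>
            (\<forall>lam. 0 < lam \<and> lam < lc \<longrightarrow>
              (\<forall>m::int. \<bar>m\<bar> \<ge> int mc \<longrightarrow>
                kummerM (1/2 + of_int \<bar>m\<bar> + of_int m * \<alpha> / sqrt (\<alpha>^2 - lam))
                        (1 + 2 * of_int \<bar>m\<bar>) z \<ge> 1/2))"
    by blast
qed

end
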